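(* Let $A\in\mathbb{Z}^{d\times n}$, $\mathbf{b}\in\mathbb{Z}^d$, $\mathbf{c}\in\mathbb{Z}^n$, $\mathbf{u}\in\mathbb{Z}_{\ge0}^n$, and consider the ILP $\min\{\mathbf{c}^\top\mathbf{x} : A\mathbf{x}=\mathbf{b},\ \mathbf{0}\le\mathbf{x}\le\mathbf{u},\ \mathbf{x}\in\mathbb{Z}^n\}$. Then: (i) for every feasible $\mathbf{x}$ and every $\mathbf{z}\in\mathbb{Z}^n\setminus\{\mathbf{0}\}$ with $A\mathbf{z}=\mathbf{0}$ and $\mathbf{x}+\mathbf{z}$ feasible, there exists $\mathbf{g}\in\mathcal{G}(A)$ with $\mathbf{x}+\mathbf{g}$ feasible and $-\mathbf{c}^\top\mathbf{g}/\|\mathbf{g}\|_1\ge-\mathbf{c}^\top\mathbf{z}/\|\mathbf{z}\|_1$; hence a discrete steepest-descent direction is a steepest-descent direction among all nonzero integer directions applicable at $\mathbf{x}$; (ii) from any feasible solution $\mathbf{x}_0$, every sequence of discrete steepest-descent augmentations reaches an optimal solution after at most $|\mathcal{G}(A)|$ augmentations.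
   Context: Feasible solutions are the $\mathbf{x}\in\mathbb{Z}^n$ with $A\mathbf{x}=\mathbf{b}$, $\mathbf{0}\le\mathbf{x}\le\mathbf{u}$. For $\mathbf{v},\mathbf{w}\in\mathbb{R}^n$ write $\mathbf{v}\sqsubseteq\mathbf{w}$ if $v_iw_i\ge0$ and $|v_i|\le|w_i|$ for all $i$. The Graver basis $\mathcal{G}(A)$ is the set of $\sqsubseteq$-minimal elements of $(\ker(A)\cap\mathbb{Z}^n)\setminus\{\mathbf{0}\}$. Discrete steepest-descent augmentation: given a feasible $\mathbf{x}_k$, choose $\mathbf{z}\in\mathcal{G}(A)$ maximizing $-\mathbf{c}^\top\mathbf{z}/\|\mathbf{z}\|_1$ among all $\mathbf{z}\in\mathcal{G}(A)$ with $\mathbf{x}_k+\mathbf{z}$ feasible; if this maximum is positive, let $\alpha$ be the largest integer with $\mathbf{x}_k+\alpha\mathbf{z}$ feasible and set $\mathbf{x}_{k+1}:=\mathbf{x}_k+\alpha\mathbf{z}$, otherwise stop. *)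

theory Defs
  imports "HOL-Analysis.Analysis"
begin

definition feasible :: "int ^ 'n ^ 'd \<Rightarrow> int ^ 'd \<Rightarrow> int ^ 'n \<Rightarrow> int ^ 'n \<Rightarrow> bool" where
  "feasible A b u x \<longleftrightarrow> A *v x = b \<and> (\<forall>i. 0 \<le> x $ i \<and> x $ i \<le> u $ i)"

definition cost :: "int ^ 'n \<Rightarrow> int ^ 'n \<Rightarrow> int" where
  "cost c x = (\<Sum>i\<in>UNIV. c $ i * x $ i)"

definition norm1 :: "int ^ 'n \<Rightarrow> int" where
  "norm1 z = (\<Sum>i\<in>UNIV. \<bar>z $ i\<bar>)"

definition ratio :: "int ^ 'n \<Rightarrow> int ^ 'n \<Rightarrow> real" where
  "ratio c z = - real_of_int (cost c z) / real_of_int (norm1 z)"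

definition conformal :: "int ^ 'n \<Rightarrow> int ^ 'n \<Rightarrow> bool" (infix "\<sqsubseteq>" 50) where
  "v \<sqsubseteq> w \<longleftrightarrow> (\<forall>i. v $ i * w $ i \<ge> 0 \<and> \<bar>v $ i\<bar> \<le> \<bar>w $ i\<bar>)"

definition graver :: "int ^ 'n ^ 'd \<Rightarrow> (int ^ 'n) set" where
  "graver A = {g. A *v g = 0 \<and> g \<noteq> 0 \<and>
      \<not> (\<exists>h. A *v h = 0 \<and> h \<noteq> 0 \<and> h \<sqsubseteq> g \<and> h \<noteq> g)}"

definition optimal :: "int ^ 'n ^ 'd \<Rightarrow> int ^ 'd \<Rightarrow> int ^ 'n \<Rightarrow> int ^ 'n \<Rightarrow> int ^ 'n \<Rightarrow> bool" where
  "optimal A b u c x \<longleftrightarrow> feasible A b u x \<and> (\<forall>y. feasible A b u y \<longrightarrow> cost c x \<le> cost c y)"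

definition dsd_step :: "int ^ 'n ^ 'd \<Rightarrow> int ^ 'd \<Rightarrow> int ^ 'n \<Rightarrow> int ^ 'n \<Rightarrow> int ^ 'n \<Rightarrow> int ^ 'n \<Rightarrow> bool" where
  "dsd_step A b u c x x' \<longleftrightarrow> feasible A b u x \<and>
     (\<exists>z \<in> graver A. feasible A b u (x + z)
        \<and> (\<forall>g \<in> graver A. feasible A b u (x + g) \<longrightarrow> ratio c g \<le> ratio c z)
        \<and> ratio c z > 0
        \<and> (\<exists>\<alpha>::int. feasible A b u (x + of_int \<alpha> *s z)
              \<and> (\<forall>\<beta>::int. feasible A b u (x + of_int \<beta> *s z) \<longrightarrow> \<beta> \<le> \<alpha>)
              \<and> x' = x + of_int \<alpha> *s z))"

definition dsd_stops :: "int ^ 'n ^ 'd \<Rightarrow> int ^ 'd \<Rightarrow> int ^ 'n \<Rightarrow> int ^ 'n \<Rightarrow> int ^ 'n \<Rightarrow> bool" where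
  "dsd_stops A b u c x \<longleftrightarrow>
     \<not> (\<exists>z \<in> graver A. feasible A b u (x + z) \<and> ratio c z > 0)"

end

theory Submission
  imports Defs "HOL-Library.Ramsey"
begin

text \<open>
  For a rate R, the excess of a direction v is the cost decrease along v minus
  R times its l1-length.  It is additive along conformal decompositions and superadditive in
  general (triangle inequality), and for R > 0 it is additive on a + w only if a is conformal
  to a + w.

  (i) Every nonzero kernel vector z splits into two conformal kernel parts unless it is a Graver
  element; by additivity one part has ratio at least that of z.  Induction on the l1-norm gives a
  Graver element g conformal to z with ratio at least that of z, and g is applicable wherever z
  is, because the box constraints are preserved under conformal shortening.

  (ii) Finiteness of the Graver basis is Dickson's lemma (proved here via Ramsey's theorem).
  Along a run of steepest-descent augmentations the step ratios are non-increasing, and a repeated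
  direction z_i = z_m (i < m) would make the step length at i non-maximal: the segment from
  x_(i+1) to x_m descends at rate at least ratio(z_m), so by the excess argument
  (alpha_i + 1) z_i is conformal to a feasible move.  Hence the directions are distinct Graver
  elements, which bounds the number of steps; at a stopping point the steepest-descent bound
  with rate 0 gives optimality.
\<close>

lemma kernel_smult: "(A :: int ^ 'n ^ 'd) *v (k *s z) = k *s (A *v z)"
  by (simp add: vec_eq_iff matrix_vector_mult_def algebra_simps sum_distrib_left)

lemma cost_add: "cost c (x + y) = cost c x + cost c y"
  by (simp add: cost_def algebra_simps sum.distrib)

lemma cost_diff: "cost c (x - y) = cost c x - cost c y"
  by (simp add: cost_def algebra_simps sum_subtractf)

lemma cost_smult: "cost c (k *s y) = k * cost c y"
  by (simp add: cost_def algebra_simps sum_distrib_left)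

lemma norm1_pos: "z \<noteq> 0 \<Longrightarrow> 0 < norm1 z"
proof -
  assume "z \<noteq> 0"
  then obtain i where "z $ i \<noteq> 0" by (auto simp: vec_eq_iff)
  then show ?thesis unfolding norm1_def by (intro sum_pos2[where i=i]) auto
qed

lemma norm1_add_le: "norm1 (a + b) \<le> norm1 a + norm1 b"
  unfolding norm1_def sum.distrib[symmetric] by (rule sum_mono) (simp add: abs_triangle_ineq)

lemma norm1_smult: "norm1 (k *s a) = \<bar>k\<bar> * norm1 a"
  by (simp add: norm1_def abs_mult sum_distrib_left)

lemma conformal_iff:
  "h \<sqsubseteq> z \<longleftrightarrow> (\<forall>i. (0 \<le> h $ i \<and> 0 \<le> z $ i \<or> h $ i \<le> 0 \<and> z $ i \<le> 0) \<and> \<bar>h $ i\<bar> \<le> \<bar>z $ i\<bar>)"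
  unfolding conformal_def zero_le_mult_iff by blast

lemma conformal_refl: "z \<sqsubseteq> z"
  by (simp add: conformal_def)

lemma conformal_trans: "g \<sqsubseteq> h \<Longrightarrow> h \<sqsubseteq> z \<Longrightarrow> g \<sqsubseteq> z"
  unfolding conformal_def zero_le_mult_iff by (smt (verit))

lemma conformal_complement:
  assumes "h \<sqsubseteq> z" shows "z - h \<sqsubseteq> z"
  unfolding conformal_iff
proof
  fix i
  from assms[unfolded conformal_iff, rule_format, of i]
  show "(0 \<le> (z - h) $ i \<and> 0 \<le> z $ i \<or> (z - h) $ i \<le> 0 \<and> z $ i \<le> 0) \<and> \<bar>(z - h) $ i\<bar> \<le> \<bar>z $ i\<bar>"
    by (simp only: vector_minus_component, arith)
qed

lemma norm1_conformal_split:
  assumes "h \<sqsubseteq> z" shows "norm1 z = norm1 h + norm1 (z - h)"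
  unfolding norm1_def sum.distrib[symmetric]
proof (rule sum.cong)
  fix i
  from assms[unfolded conformal_iff, rule_format, of i]
  show "\<bar>z $ i\<bar> = \<bar>h $ i\<bar> + \<bar>(z - h) $ i\<bar>"
    by (simp only: vector_minus_component, arith)
qed simp

lemma conformal_if_norm1_additive:
  assumes "norm1 a + norm1 b \<le> norm1 (a + b)"
  shows "a \<sqsubseteq> a + b"
proof -
  have additive: "\<bar>a $ t + b $ t\<bar> = \<bar>a $ t\<bar> + \<bar>b $ t\<bar>" for t
  proof (rule ccontr)
    assume "\<bar>a $ t + b $ t\<bar> \<noteq> \<bar>a $ t\<bar> + \<bar>b $ t\<bar>"
    then have "\<bar>a $ t + b $ t\<bar> < \<bar>a $ t\<bar> + \<bar>b $ t\<bar>"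
      using abs_triangle_ineq[of "a $ t" "b $ t"] by linarith
    then have "(\<Sum>i\<in>UNIV. \<bar>a $ i + b $ i\<bar>) < (\<Sum>i\<in>UNIV. \<bar>a $ i\<bar> + \<bar>b $ i\<bar>)"
      by (intro sum_strict_mono_ex1) (auto simp: abs_triangle_ineq)
    then show False using assms by (simp add: norm1_def sum.distrib)
  qed
  show ?thesis
    unfolding conformal_iff
  proof
    fix t
    from additive[of t]
    show "(0 \<le> a $ t \<and> 0 \<le> (a + b) $ t \<or> a $ t \<le> 0 \<and> (a + b) $ t \<le> 0) \<and> \<bar>a $ t\<bar> \<le> \<bar>(a + b) $ t\<bar>"
      unfolding vector_add_component by arith
  qed
qed

lemma conformal_feasible:
  assumes "feasible A b u x" "feasible A b u (x + z)" "A *v g = 0" "g \<sqsubseteq> z"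
  shows "feasible A b u (x + g)"
proof -
  have "0 \<le> x $ i + g $ i \<and> x $ i + g $ i \<le> u $ i" for i
    using assms(1,2) assms(4)[unfolded conformal_iff, rule_format, of i]
    unfolding feasible_def vector_add_component by (smt (verit))
  then show ?thesis
    using assms(1,3) by (simp add: feasible_def matrix_vector_right_distrib)
qed

definition excess :: "int ^ 'n \<Rightarrow> real \<Rightarrow> int ^ 'n \<Rightarrow> real" where
  "excess c R v = - real_of_int (cost c v) - R * real_of_int (norm1 v)"

lemma excess_zero [simp]: "excess c R 0 = 0"
  by (simp add: excess_def cost_def norm1_def)

lemma excess_superadditive:
  assumes "0 \<le> R"
  shows "excess c R a + excess c R w \<le> excess c R (a + w)"
proof -
  have "R * real_of_int (norm1 (a + w)) \<le> R * real_of_int (norm1 a) + R * real_of_int (norm1 w)"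
    using mult_left_mono[OF of_int_le_iff[THEN iffD2, OF norm1_add_le[of a w]] assms]
    by (simp add: distrib_left)
  then show ?thesis by (simp add: excess_def cost_add)
qed

lemma excess_smult:
  assumes "0 \<le> k"
  shows "excess c R (k *s v) = real_of_int k * excess c R v"
  using assms by (simp add: excess_def cost_smult norm1_smult algebra_simps)

lemma excess_conformal_split:
  assumes "h \<sqsubseteq> z"
  shows "excess c R z = excess c R h + excess c R (z - h)"
  using norm1_conformal_split[OF assms] by (simp add: excess_def cost_diff algebra_simps)

lemma conformal_if_excess_additive:
  assumes "0 < R" "excess c R (a + w) \<le> excess c R a + excess c R w"
  shows "a \<sqsubseteq> a + w"
proof (rule conformal_if_norm1_additive)
  have "R * real_of_int (norm1 a + norm1 w) \<le> R * real_of_int (norm1 (a + w))"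
    using assms(2) by (simp add: excess_def cost_add algebra_simps)
  then show "norm1 a + norm1 w \<le> norm1 (a + w)"
    using assms(1) by (simp only: mult_le_cancel_left_pos of_int_le_iff)
qed

lemma ratio_le_iff_excess:
  assumes "v \<noteq> 0"
  shows "ratio c v \<le> R \<longleftrightarrow> excess c R v \<le> 0"
proof -
  have "0 < real_of_int (norm1 v)" using norm1_pos[OF assms] by simp
  then show ?thesis unfolding ratio_def excess_def pos_divide_le_eq[OF \<open>0 < _\<close>] by simp
qed

lemma ratio_ge_iff_excess:
  assumes "v \<noteq> 0"
  shows "R \<le> ratio c v \<longleftrightarrow> 0 \<le> excess c R v"
proof -
  have "0 < real_of_int (norm1 v)" using norm1_pos[OF assms] by simp
  then show ?thesis unfolding ratio_def excess_def pos_le_divide_eq[OF \<open>0 < _\<close>] by simp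
qed

lemma excess_at_own_ratio:
  assumes "v \<noteq> 0"
  shows "excess c (ratio c v) v = 0"
  using ratio_le_iff_excess[OF assms, of c "ratio c v"] ratio_ge_iff_excess[OF assms, of "ratio c v" c]
  by simp

lemma graver_below_excess:
  fixes A :: "int ^ 'n ^ 'd"
  assumes "z \<noteq> 0" "A *v z = 0" "0 \<le> excess c R z"
  shows "\<exists>g\<in>graver A. g \<sqsubseteq> z \<and> 0 \<le> excess c R g"
  using assms
proof (induction "nat (norm1 z)" arbitrary: z rule: less_induct)
  case less
  show ?case
  proof (cases "z \<in> graver A")
    case True
    then show ?thesis using less.prems(3) conformal_refl by blast
  next
    case False
    then obtain h where h: "A *v h = 0" "h \<noteq> 0" "h \<sqsubseteq> z" "h \<noteq> z"
      using less.prems(1,2) by (auto simp: graver_def)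
    define k where "k = z - h"
    have k: "A *v k = 0" "k \<noteq> 0" "k \<sqsubseteq> z"
      using h less.prems(2) conformal_complement[OF h(3)]
      by (auto simp: k_def matrix_vector_mult_diff_distrib)
    have smaller: "nat (norm1 h) < nat (norm1 z)" "nat (norm1 k) < nat (norm1 z)"
      using norm1_conformal_split[OF h(3)] norm1_pos[OF h(2)] norm1_pos[OF k(2)]
      by (auto simp: k_def)
    have "0 \<le> excess c R h \<or> 0 \<le> excess c R k"
      using excess_conformal_split[OF h(3), of c R] less.prems(3) by (auto simp: k_def)
    then show ?thesis
    proof
      assume "0 \<le> excess c R h"
      with less.hyps[OF smaller(1) h(2,1)] h(3) show ?thesis by (meson conformal_trans)
    next
      assume "0 \<le> excess c R k"
      with less.hyps[OF smaller(2) k(2,1)] k(3) show ?thesis by (meson conformal_trans)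
    qed
  qed
qed

lemma graver_steepest:
  assumes "feasible A b u x" "z \<noteq> 0" "A *v z = 0" "feasible A b u (x + z)"
  shows "\<exists>g\<in>graver A. feasible A b u (x + g) \<and> ratio c z \<le> ratio c g"
proof -
  obtain g where g: "g \<in> graver A" "g \<sqsubseteq> z" "0 \<le> excess c (ratio c z) g"
    using graver_below_excess[OF assms(2,3), of c "ratio c z"] excess_at_own_ratio[OF assms(2), of c]
    by auto
  then have "A *v g = 0" "g \<noteq> 0" by (auto simp: graver_def)
  then show ?thesis
    using g conformal_feasible[OF assms(1,4)] ratio_ge_iff_excess by blast
qed

lemma steepest_graver_bound:
  assumes "feasible A b u x" "\<forall>g\<in>graver A. feasible A b u (x + g) \<longrightarrow> ratio c g \<le> R"
    and "A *v v = 0" "feasible A b u (x + v)"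
  shows "excess c R v \<le> 0"
proof (cases "v = 0")
  case False
  then obtain g where "g \<in> graver A" "feasible A b u (x + g)" "ratio c v \<le> ratio c g"
    using graver_steepest[OF assms(1) _ assms(3,4)] by blast
  with assms(2) have "ratio c v \<le> R" by force
  then show ?thesis using ratio_le_iff_excess[OF False] by simp
qed simp

text \<open>The stopping rule is correct: rate 0 in the previous lemma means no feasible point is cheaper.\<close>
lemma stops_imp_optimal:
  assumes "feasible A b u x" "dsd_stops A b u c x"
  shows "optimal A b u c x"
  unfolding optimal_def
proof (intro conjI allI impI)
  fix y assume y: "feasible A b u y"
  have "\<forall>g\<in>graver A. feasible A b u (x + g) \<longrightarrow> ratio c g \<le> 0"
    using assms(2) by (auto simp: dsd_stops_def not_less)
  moreover have "A *v (y - x) = 0" "feasible A b u (x + (y - x))"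
    using assms(1) y by (auto simp: feasible_def matrix_vector_mult_diff_distrib)
  ultimately have "excess c 0 (y - x) \<le> 0"
    using steepest_graver_bound[OF assms(1)] by blast
  then show "cost c x \<le> cost c y" by (simp add: excess_def cost_diff)
qed (rule assms(1))

text \<open>Otherwise colour each pair {i, j} by a coordinate that strictly
  decreases; Ramsey's theorem yields an infinite set along which one coordinate strictly
  decreases, which is impossible in N.\<close>
lemma dickson:
  fixes f :: "nat \<Rightarrow> 'a::finite \<Rightarrow> nat"
  shows "\<exists>i j. i < j \<and> (\<forall>t. f i t \<le> f j t)"
proof (rule ccontr)
  assume "\<not> ?thesis"
  then have drop: "\<exists>t. f j t < f i t" if "i < j" for i j
    using that by (meson not_le)
  obtain e :: "'a \<Rightarrow> nat" where e: "bij_betw e UNIV {0..<CARD('a)}"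
    using ex_bij_betw_finite_nat[of "UNIV :: 'a set"] by auto
  define colour where "colour X = e (SOME t. f (Max X) t < f (Min X) t)" for X :: "nat set"
  have "colour {i, j} < CARD('a)" for i j
    using e by (auto simp: colour_def bij_betw_def)
  then obtain Y s where Y: "infinite Y" "\<forall>i\<in>Y. \<forall>j\<in>Y. i \<noteq> j \<longrightarrow> colour {i, j} = s"
    using Ramsey2[of "UNIV :: nat set" colour "CARD('a)"] by blast
  define t where "t = inv e s"
  have decreasing: "f j t < f i t" if "i \<in> Y" "j \<in> Y" "i < j" for i j
  proof -
    have "Max {i, j} = j" "Min {i, j} = i" using that(3) by auto
    then have "e (SOME t. f j t < f i t) = s"
      using Y(2) that by (metis colour_def less_irrefl)
    then have "(SOME t. f j t < f i t) = t"
      using bij_betw_imp_inj_on[OF e] by (auto simp: t_def)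
    then show ?thesis using someI_ex[OF drop[OF that(3)]] by simp
  qed
  define r where "r = enumerate Y"
  have "f (r n) t + n \<le> f (r 0) t" for n
  proof (induction n)
    case (Suc n)
    have "f (r (Suc n)) t < f (r n) t"
      using decreasing enumerate_in_set[OF Y(1)] enumerate_step[OF Y(1)] by (simp add: r_def)
    then show ?case using Suc.IH by simp
  qed simp
  then show False by (metis add_leE not_less_eq_eq)
qed

lemma conformal_if_parts_le:
  assumes "\<forall>t. nat (v $ t) \<le> nat (w $ t) \<and> nat (- v $ t) \<le> nat (- w $ t)"
  shows "v \<sqsubseteq> w"
  unfolding conformal_iff
proof
  fix t
  from assms[rule_format, of t]
  show "(0 \<le> v $ t \<and> 0 \<le> w $ t \<or> v $ t \<le> 0 \<and> w $ t \<le> 0) \<and> \<bar>v $ t\<bar> \<le> \<bar>w $ t\<bar>"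
    by linarith
qed

text \<open>The Graver basis is finite: an infinite one would contain two distinct elements comparable in
  the conformal order (Dickson's lemma on positive and negative parts), contradicting minimality.\<close>
lemma graver_finite: "finite (graver (A :: int ^ 'n ^ 'd))"
proof (rule ccontr)
  assume "infinite (graver A)"
  then obtain e :: "nat \<Rightarrow> int ^ 'n" where e: "inj e" "range e \<subseteq> graver A"
    using infinite_countable_subset by blast
  obtain i j where ij: "i < j"
    "\<forall>p :: 'n \<times> bool. (case p of (t, pos) \<Rightarrow> nat (if pos then e i $ t else - e i $ t))
                     \<le> (case p of (t, pos) \<Rightarrow> nat (if pos then e j $ t else - e j $ t))"
    using dickson[of "\<lambda>m (t, pos). nat (if pos then e m $ t else - e m $ t)"] by blast
  have "e i \<sqsubseteq> e j"
    using ij(2)[rule_format, of "(_, True)"] ij(2)[rule_format, of "(_, False)"]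
    by (intro conformal_if_parts_le) simp
  moreover have "e i \<noteq> e j" using e(1) ij(1) by (auto dest: injD)
  moreover have "e i \<in> graver A" "e j \<in> graver A" using e(2) by auto
  ultimately show False unfolding graver_def by blast
qed

definition steepest_augmentation ::
    "int ^ 'n ^ 'd \<Rightarrow> int ^ 'd \<Rightarrow> int ^ 'n \<Rightarrow> int ^ 'n \<Rightarrow> int ^ 'n \<Rightarrow> int ^ 'n \<Rightarrow> int \<Rightarrow> int ^ 'n \<Rightarrow> bool"
  where "steepest_augmentation A b u c x z \<alpha> x' \<longleftrightarrow>
    z \<in> graver A \<and> feasible A b u (x + z)
    \<and> (\<forall>g\<in>graver A. feasible A b u (x + g) \<longrightarrow> ratio c g \<le> ratio c z)
    \<and> 0 < ratio c z
    \<and> feasible A b u (x + \<alpha> *s z) \<and> (\<forall>\<beta>. feasible A b u (x + \<beta> *s z) \<longrightarrow> \<beta> \<le> \<alpha>)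
    \<and> x' = x + \<alpha> *s z"

lemma dsd_step_iff:
  "dsd_step A b u c x x' \<longleftrightarrow> feasible A b u x \<and> (\<exists>z \<alpha>. steepest_augmentation A b u c x z \<alpha> x')"
  unfolding dsd_step_def steepest_augmentation_def by (simp add: Bex_def)

locale dsd_run =
  fixes A :: "int ^ 'n ^ 'd" and b :: "int ^ 'd" and u c :: "int ^ 'n"
    and x z :: "nat \<Rightarrow> int ^ 'n" and \<alpha> :: "nat \<Rightarrow> int" and k :: nat
  assumes start_feasible: "feasible A b u (x 0)"
    and augmentations: "i < k \<Longrightarrow> steepest_augmentation A b u c (x i) (z i) (\<alpha> i) (x (Suc i))"
begin

lemma direction_graver: "i < k \<Longrightarrow> z i \<in> graver A"
  and direction_feasible: "i < k \<Longrightarrow> feasible A b u (x i + z i)"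
  and direction_steepest:
    "i < k \<Longrightarrow> g \<in> graver A \<Longrightarrow> feasible A b u (x i + g) \<Longrightarrow> ratio c g \<le> ratio c (z i)"
  and direction_improving: "i < k \<Longrightarrow> 0 < ratio c (z i)"
  and step_feasible: "i < k \<Longrightarrow> feasible A b u (x i + \<alpha> i *s z i)"
  and step_maximal: "i < k \<Longrightarrow> feasible A b u (x i + \<beta> *s z i) \<Longrightarrow> \<beta> \<le> \<alpha> i"
  and step_taken: "i < k \<Longrightarrow> x (Suc i) = x i + \<alpha> i *s z i"
  using augmentations unfolding steepest_augmentation_def by blast+

lemma direction_kernel: "i < k \<Longrightarrow> A *v z i = 0"
  and direction_nonzero: "i < k \<Longrightarrow> z i \<noteq> 0"
  using direction_graver by (auto simp: graver_def)

lemma step_length_pos: "i < k \<Longrightarrow> 1 \<le> \<alpha> i"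
  using step_maximal[of i 1] direction_feasible[of i] by simp

lemma iterate_feasible: "i \<le> k \<Longrightarrow> feasible A b u (x i)"
proof (induction i)
  case 0
  show ?case by (rule start_feasible)
next
  case (Suc i)
  then show ?case using step_feasible step_taken by simp
qed

lemma excess_bound:
  assumes "i < k" "A *v v = 0" "feasible A b u (x i + v)"
  shows "excess c (ratio c (z i)) v \<le> 0"
  using steepest_graver_bound[OF iterate_feasible[of i] _ assms(2,3)] direction_steepest[OF assms(1)]
    assms(1) by auto

text \<open>The ratios of successive directions are non-increasing: z (i+1) is applicable at x i after the
  full step along z i, and that step has zero excess at the rate of z i.\<close>
lemma ratio_step_antimono:
  assumes "Suc i < k"
  shows "ratio c (z (Suc i)) \<le> ratio c (z i)"
proof -
  have i: "i < k" using assms by simp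
  define R where "R = ratio c (z i)"
  define v where "v = \<alpha> i *s z i + z (Suc i)"
  have "x i + v = x (Suc i) + z (Suc i)"
    using step_taken[OF i] by (simp add: v_def algebra_simps)
  then have "feasible A b u (x i + v)"
    using direction_feasible[OF assms] by simp
  moreover have "A *v v = 0"
    using direction_kernel[OF i] direction_kernel[OF assms]
    by (simp add: v_def matrix_vector_right_distrib kernel_smult)
  ultimately have "excess c R v \<le> 0"
    using excess_bound[OF i] by (simp add: R_def)
  moreover have "excess c R (\<alpha> i *s z i) = 0"
    using step_length_pos[OF i] excess_smult[of "\<alpha> i" c R "z i"]
      excess_at_own_ratio[OF direction_nonzero[OF i]] by (simp add: R_def)
  moreover have "excess c R (\<alpha> i *s z i) + excess c R (z (Suc i)) \<le> excess c R v"
    using excess_superadditive[OF less_imp_le[OF direction_improving[OF i]]]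
    by (simp add: R_def v_def)
  ultimately have "excess c R (z (Suc i)) \<le> 0" by linarith
  then show ?thesis
    using ratio_le_iff_excess[OF direction_nonzero[OF assms]] by (simp add: R_def)
qed

lemma ratio_antimono:
  assumes "i \<le> j" "j < k"
  shows "ratio c (z j) \<le> ratio c (z i)"
  using assms
proof (induction j rule: dec_induct)
  case (step n)
  then show ?case using ratio_step_antimono[of n] by simp
qed simp

text \<open>Since the ratios decrease, every partial displacement x p - x i with p <= m descends at rate at
  least the ratio of z m.\<close>
lemma displacement_excess:
  assumes "m < k" "i \<le> p" "p \<le> m"
  shows "0 \<le> excess c (ratio c (z m)) (x p - x i)"
  using assms(2,3)
proof (induction p rule: dec_induct)
  case (step n)
  let ?R = "ratio c (z m)"
  have n: "n < k" "n \<le> m" using step assms(1) by auto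
  have "0 \<le> excess c ?R (z n)"
    using ratio_antimono[OF n(2) assms(1)] ratio_ge_iff_excess[OF direction_nonzero[OF n(1)]] by simp
  then have "0 \<le> excess c ?R (\<alpha> n *s z n)"
    using step_length_pos[OF n(1)] excess_smult[of "\<alpha> n" c ?R "z n"] by simp
  moreover have split: "x (Suc n) - x i = (x n - x i) + \<alpha> n *s z n"
    using step_taken[OF n(1)] by (simp add: algebra_simps)
  ultimately show ?case
    unfolding split
    using step.IH n(2) excess_superadditive[OF less_imp_le[OF direction_improving[OF assms(1)]],
        of c "x n - x i" "\<alpha> n *s z n"]
    by linarith
qed simp

text \<open>No direction is used twice: if z i = z m with i < m, then (alpha i + 1) z i would be an
  applicable step at x i, contradicting the maximality of alpha i.\<close>
lemma directions_distinct:
  assumes "i < m" "m < k"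
  shows "z i \<noteq> z m"
proof
  assume same: "z i = z m"
  have i: "i < k" using assms by simp
  define R where "R = ratio c (z m)"
  define a where "a = (\<alpha> i + 1) *s z i"
  define w where "w = x m - x (Suc i)"
  have reach: "x i + (a + w) = x m + z m"
    unfolding a_def w_def step_taken[OF i] vector_sadd_rdistrib same by simp
  then have reach_feasible: "feasible A b u (x i + (a + w))"
    using direction_feasible[OF assms(2)] by simp
  have "A *v (a + w) = 0"
    using reach_feasible iterate_feasible[of i] i
    by (simp add: feasible_def matrix_vector_right_distrib)
  then have "excess c R (a + w) \<le> 0"
    using excess_bound[OF i _ reach_feasible] same by (simp add: R_def)
  moreover have "excess c R a = 0"
    using step_length_pos[OF i] excess_smult[of "\<alpha> i + 1" c R "z i"]
      excess_at_own_ratio[OF direction_nonzero[OF i]] same by (simp add: R_def a_def)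
  moreover have "0 \<le> excess c R w"
    using displacement_excess[OF assms(2), of "Suc i" m] assms by (simp add: R_def w_def)
  ultimately have "a \<sqsubseteq> a + w"
    using direction_improving[OF assms(2)]
    by (intro conformal_if_excess_additive[of R c]) (simp_all add: R_def)
  moreover have "A *v a = 0"
    unfolding a_def kernel_smult direction_kernel[OF i] by simp
  ultimately have "feasible A b u (x i + (\<alpha> i + 1) *s z i)"
    using conformal_feasible[OF iterate_feasible[of i] reach_feasible] i by (simp add: a_def)
  then show False using step_maximal[OF i] by fastforce
qed

lemma length_bound: "k \<le> card (graver A)"
proof -
  have "inj_on z {..<k}"
    by (intro inj_onI) (metis directions_distinct lessThan_iff linorder_neqE_nat)
  moreover have "z ` {..<k} \<subseteq> graver A" using direction_graver by auto
  ultimately show ?thesis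
    using card_inj_on_le[OF _ _ graver_finite] by fastforce
qed

end

lemma dsd_run_of_steps:
  assumes "feasible A b u (xs 0)" "\<forall>i<k. dsd_step A b u c (xs i) (xs (Suc i))"
  shows "\<exists>z \<alpha>. dsd_run A b u c xs z \<alpha> k"
proof -
  have "\<forall>i. \<exists>p. i < k \<longrightarrow> steepest_augmentation A b u c (xs i) (fst p) (snd p) (xs (Suc i))"
  proof
    fix i
    show "\<exists>p. i < k \<longrightarrow> steepest_augmentation A b u c (xs i) (fst p) (snd p) (xs (Suc i))"
    proof (cases "i < k")
      case True
      then obtain z \<alpha> where "steepest_augmentation A b u c (xs i) z \<alpha> (xs (Suc i))"
        using assms(2) dsd_step_iff by blast
      then show ?thesis by (intro exI[of _ "(z, \<alpha>)"]) simp
    qed simp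
  qed
  from choice[OF this] obtain p where p: "\<forall>i. i < k \<longrightarrow>
      steepest_augmentation A b u c (xs i) (fst (p i)) (snd (p i)) (xs (Suc i))"
    by blast
  have "dsd_run A b u c xs (fst \<circ> p) (snd \<circ> p) k"
    unfolding dsd_run_def using assms(1) p by simp
  then show ?thesis by blast
qed

theorem theorem1:
  fixes A :: "int ^ 'n ^ 'd" and b :: "int ^ 'd" and c u :: "int ^ 'n"
  assumes u_nonneg: "\<forall>i. u $ i \<ge> 0"
  shows "(\<forall>x z. feasible A b u x \<longrightarrow> z \<noteq> 0 \<longrightarrow> A *v z = 0 \<longrightarrow> feasible A b u (x + z) \<longrightarrow>
            (\<exists>g \<in> graver A. feasible A b u (x + g) \<and> ratio c g \<ge> ratio c z))
       \<and> finite (graver A)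
       \<and> (\<forall>(xs :: nat \<Rightarrow> int ^ 'n) k. feasible A b u (xs 0) \<longrightarrow>
            (\<forall>i < k. dsd_step A b u c (xs i) (xs (Suc i))) \<longrightarrow>
              k \<le> card (graver A)
              \<and> (dsd_stops A b u c (xs k) \<longrightarrow> optimal A b u c (xs k)))"
proof -
  have runs: "k \<le> card (graver A) \<and> (dsd_stops A b u c (xs k) \<longrightarrow> optimal A b u c (xs k))"
    if start: "feasible A b u (xs 0)" and steps: "\<forall>i<k. dsd_step A b u c (xs i) (xs (Suc i))"
    for xs :: "nat \<Rightarrow> int ^ 'n" and k
  proof -
    obtain z \<alpha> where "dsd_run A b u c xs z \<alpha> k"
      using dsd_run_of_steps[OF start steps] by blast
    then interpret dsd_run A b u c xs z \<alpha> k .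
    show ?thesis
      using length_bound stops_imp_optimal[OF iterate_feasible[of k]] by simp
  qed
  show ?thesis
  proof (intro conjI allI impI)
    show "\<exists>g\<in>graver A. feasible A b u (x + g) \<and> ratio c z \<le> ratio c g"
      if "feasible A b u x" "z \<noteq> 0" "A *v z = 0" "feasible A b u (x + z)" for x z
      using graver_steepest[OF that] .
  qed (use graver_finite runs in auto)
qed

end
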